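(* Assume the all-zero codeword is transmitted and $y\in\Sigma^n$ is received. (1) If the LP decoder makes a codeword error, then there exists an LP pseudocodeword $(h,z)$ with $h\ne0$ and $\Lambda(y)h^T\le0$. (2) If there exists an LP pseudocodeword $(h,z)$ with $h\ne0$ and $\Lambda(y)h^T<0$, then the LP decoder makes a codeword error.
   Context: Let $R$ be a finite ring with $q$ elements, $R^-=R\setminus\{0\}$, $\mathcal H$ an $m\times n$ matrix over $R$, $\mathcal C=\{c\in R^n:c\mathcal H^T=0\}$, $\mathcal I=\{1,\dots,n\}$, $\mathcal J=\{1,\dots,m\}$, $\mathcal I_j=\{i:\mathcal H_{j,i}\ne0\}$, $\mathcal C_j=\{b\in R^{\mathcal I_j}:\sum_{i\in\mathcal I_j}b_i\mathcal H_{j,i}=0\}$. Vectors in $\mathbb R^{(q-1)n}$ have coordinates $f_i^{(\alpha)}$, $i\in\mathcal I$, $\alpha\in R^-$. $\mathcal Q$ is the set of $(f,w)$, $f\in\mathbb R^{(q-1)n}$, $w=(w_{j,b})_{j\in\mathcal J,b\in\mathcal C_j}$, with $w_{j,b}\ge0$, $\sum_{b\in\mathcal C_j}w_{j,b}=1$ for each $j$, and $f_i^{(\alpha)}=\sum_{b\in\mathcal C_j,b_i=\alpha}w_{j,b}$ for all $j$, $i\in\mathcal I_j$, $\alpha\in R^-$. The channel is memoryless with input alphabet $R$, output alphabet $\Sigma$, transition probability (density) $p(y\mid a)$; $\lambda^{(\alpha)}(y)=\log(p(y\mid0)/p(y\mid\alpha))$ and $\Lambda(y)$ has coordinates $\lambda^{(\alpha)}(y_i)$.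 The LP decoder selects a minimizer $(f,w)$ of $\Lambda(y)f^T$ over $\mathcal Q$; with the all-zero codeword transmitted, it makes a codeword error when the selected $f$ is not the zero vector. An LP pseudocodeword is a pair $(h,z)$ with $h\in\mathbb R^{(q-1)n}$ and $z=(z_{j,b})_{j\in\mathcal J,b\in\mathcal C_j}$ nonnegative integers such that $h_i^{(\alpha)}=\sum_{b\in\mathcal C_j,b_i=\alpha}z_{j,b}$ for all $j\in\mathcal J$, $i\in\mathcal I_j$, $\alpha\in R^-$, and $\sum_{b\in\mathcal C_j}z_{j,b}=M$ for all $j$, with $M$ a nonnegative integer independent of $j$. *)

theory Defs
  imports Complex_Main
begin

text \<open>
  Coordinates I = {1..n}, checks J = {1..m}; the parity-check matrix is
  H :: nat => nat => 'r with H j i the (j,i) entry.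
  A vector f in the real space with coordinates f_i^(alpha), i in I,
  alpha in R minus 0, is a function f :: nat => 'r => real, f i alpha;
  only the values with i in {1..n} and alpha nonzero are meaningful.
  A local word b in R^(I_j) is a function nat => 'r vanishing outside I_j.
  The channel transition probability p(y|a) is p y a.
\<close>

definition supp_row :: "(nat \<Rightarrow> nat \<Rightarrow> 'r::{ring,finite}) \<Rightarrow> nat \<Rightarrow> nat \<Rightarrow> nat set" where
  "supp_row H n j = {i \<in> {1..n}. H j i \<noteq> 0}"

definition local_code :: "(nat \<Rightarrow> nat \<Rightarrow> 'r::{ring,finite}) \<Rightarrow> nat \<Rightarrow> nat \<Rightarrow> (nat \<Rightarrow> 'r) set" where
  "local_code H n j = {b. (\<forall>i. i \<notin> supp_row H n j \<longrightarrow> b i = 0) \<and>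
                          (\<Sum>i\<in>supp_row H n j. b i * H j i) = 0}"

definition in_polytope_Q ::
  "(nat \<Rightarrow> nat \<Rightarrow> 'r::{ring,finite}) \<Rightarrow> nat \<Rightarrow> nat \<Rightarrow> (nat \<Rightarrow> 'r \<Rightarrow> real)
     \<Rightarrow> (nat \<Rightarrow> (nat \<Rightarrow> 'r) \<Rightarrow> real) \<Rightarrow> bool" where
  "in_polytope_Q H n m f w \<longleftrightarrow>
     (\<forall>j\<in>{1..m}.
        (\<forall>b\<in>local_code H n j. w j b \<ge> 0) \<and>
        (\<Sum>b\<in>local_code H n j. w j b) = 1 \<and>
        (\<forall>i\<in>supp_row H n j. \<forall>\<alpha>. \<alpha> \<noteq> 0 \<longrightarrow>
            f i \<alpha> = (\<Sum>b\<in>{b\<in>local_code H n j. b i = \<alpha>}. w j b)))"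

definition llr :: "('s \<Rightarrow> 'r::{ring,finite} \<Rightarrow> real) \<Rightarrow> 'r \<Rightarrow> 's \<Rightarrow> real" where
  "llr p \<alpha> t = ln (p t 0 / p t \<alpha>)"

definition cost :: "nat \<Rightarrow> ('s \<Rightarrow> 'r::{ring,finite} \<Rightarrow> real) \<Rightarrow> (nat \<Rightarrow> 's) \<Rightarrow> (nat \<Rightarrow> 'r \<Rightarrow> real) \<Rightarrow> real" where
  "cost n p y f = (\<Sum>i\<in>{1..n}. \<Sum>\<alpha>\<in>{\<alpha>. \<alpha> \<noteq> 0}. llr p \<alpha> (y i) * f i \<alpha>)"

definition nonzero_vec :: "nat \<Rightarrow> (nat \<Rightarrow> 'r::{ring,finite} \<Rightarrow> real) \<Rightarrow> bool" where
  "nonzero_vec n f \<longleftrightarrow> (\<exists>i\<in>{1..n}. \<exists>\<alpha>. \<alpha> \<noteq> 0 \<and> f i \<alpha> \<noteq> 0)"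

text \<open>(f,w) is a minimizer of Lambda(y) f^T over Q, i.e. a possible output of the LP decoder.\<close>
definition LP_minimizer ::
  "(nat \<Rightarrow> nat \<Rightarrow> 'r::{ring,finite}) \<Rightarrow> nat \<Rightarrow> nat \<Rightarrow> ('s \<Rightarrow> 'r \<Rightarrow> real) \<Rightarrow> (nat \<Rightarrow> 's)
     \<Rightarrow> (nat \<Rightarrow> 'r \<Rightarrow> real) \<Rightarrow> (nat \<Rightarrow> (nat \<Rightarrow> 'r) \<Rightarrow> real) \<Rightarrow> bool" where
  "LP_minimizer H n m p y f w \<longleftrightarrow>
     in_polytope_Q H n m f w \<and>
     (\<forall>f' w'. in_polytope_Q H n m f' w' \<longrightarrow> cost n p y f \<le> cost n p y f')"

definition LP_pseudocodeword ::
  "(nat \<Rightarrow> nat \<Rightarrow> 'r::{ring,finite}) \<Rightarrow> nat \<Rightarrow> nat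
     \<Rightarrow> (nat \<Rightarrow> 'r \<Rightarrow> real) \<Rightarrow> (nat \<Rightarrow> (nat \<Rightarrow> 'r) \<Rightarrow> nat) \<Rightarrow> bool" where
  "LP_pseudocodeword H n m h z \<longleftrightarrow>
     (\<exists>M::nat. \<forall>j\<in>{1..m}.
        (\<Sum>b\<in>local_code H n j. z j b) = M \<and>
        (\<forall>i\<in>supp_row H n j. \<forall>\<alpha>. \<alpha> \<noteq> 0 \<longrightarrow>
            h i \<alpha> = real (\<Sum>b\<in>{b\<in>local_code H n j. b i = \<alpha>}. z j b)))"

end

theory Submission
  imports Defs "HOL-Library.Indicator_Function"
begin

text \<open>
  (1) Let \<open>(f, w)\<close> be optimal with \<open>f \<noteq> 0\<close>. The conditions on the local weights \<open>w\<close> (row sums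
  \<open>1\<close>, agreement of the marginals of different checks, vanishing outside the support of \<open>w\<close>)
  form a linear system with rational coefficients, so by Gaussian elimination it has rational
  solutions \<open>w'\<close> arbitrarily close to \<open>w\<close>. Close enough, both \<open>w'\<close> and \<open>2 w - w'\<close> are
  nonnegative and give points of \<open>Q\<close> whose midpoint is the optimum, so by linearity the cost
  at \<open>w'\<close> is at most the optimal cost, which is \<open>\<le> 0\<close>. Clearing the denominators of \<open>w'\<close> gives
  the pseudocodeword; it is nonzero because \<open>w'\<close> has the support of \<open>w\<close>. Coordinates in no
  check have zero log-likelihood ratios at an optimum and are handled by a unit vector.

  (2) If a pseudocodeword \<open>(h, z)\<close> with row sums \<open>M > 0\<close> has negative cost, then
  \<open>(h / M, z / M) \<in> Q\<close> has negative cost, so the optimum is not attained at \<open>f = 0\<close>; if \<open>M = 0\<close>,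
  then \<open>h\<close> lives on coordinates in no check and can be added to any point of \<open>Q\<close>.
\<close>

section \<open>Linear systems with rational coefficients\<close>

definition solves :: "'v set \<Rightarrow> (('v \<Rightarrow> real) \<times> real) set \<Rightarrow> ('v \<Rightarrow> real) \<Rightarrow> bool" where
  "solves V E x \<longleftrightarrow> (\<forall>(a, c)\<in>E. (\<Sum>v\<in>V. a v * x v) = c)"

definition rational_system :: "'v set \<Rightarrow> (('v \<Rightarrow> real) \<times> real) set \<Rightarrow> bool" where
  "rational_system V E \<longleftrightarrow> (\<forall>(a, c)\<in>E. (\<forall>v\<in>V. a v \<in> \<rat>) \<and> c \<in> \<rat>)"

lemma solves_cong:
  assumes "\<And>v. v \<in> V \<Longrightarrow> x v = x' v"
  shows "solves V E x \<longleftrightarrow> solves V E x'"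
  unfolding solves_def using assms by (simp cong: sum.cong)

lemma solves_Un: "solves V (E \<union> E') x \<longleftrightarrow> solves V E x \<and> solves V E' x"
  unfolding solves_def ball_Un by blast

lemma solves_UN: "solves V (\<Union>a\<in>A. E a) x \<longleftrightarrow> (\<forall>a\<in>A. solves V (E a) x)"
  unfolding solves_def by auto

lemma solves_singleton: "solves V {(a, c)} x \<longleftrightarrow> (\<Sum>v\<in>V. a v * x v) = c"
  unfolding solves_def by simp

lemma rational_system_subset:
  "rational_system V E \<Longrightarrow> V' \<subseteq> V \<Longrightarrow> rational_system V' E"
  unfolding rational_system_def by blast

lemma solves_insert_free_var:
  assumes "finite V" "v \<notin> V" "\<forall>(a, c)\<in>E. a v = 0"
  shows "solves (insert v V) E x \<longleftrightarrow> solves V E x"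
proof -
  have "(\<Sum>u\<in>insert v V. a u * x u) = (\<Sum>u\<in>V. a u * x u)" if "(a, c) \<in> E" for a c
    using assms that by auto
  then show ?thesis
    unfolding solves_def by fastforce
qed

definition eliminate :: "'v \<Rightarrow> ('v \<Rightarrow> real) \<Rightarrow> real \<Rightarrow> ('v \<Rightarrow> real) \<times> real \<Rightarrow> ('v \<Rightarrow> real) \<times> real" where
  "eliminate v a0 c0 = (\<lambda>(a, c). (\<lambda>u. a u - a v / a0 v * a0 u, c - a v / a0 v * c0))"

lemma eliminate_residual:
  assumes "finite V" "v \<notin> V" "a0 v \<noteq> 0"
  shows "(\<Sum>u\<in>V. fst (eliminate v a0 c0 (a, c)) u * x u) - snd (eliminate v a0 c0 (a, c))
       = ((\<Sum>u\<in>insert v V. a u * x u) - c) - a v / a0 v * ((\<Sum>u\<in>insert v V. a0 u * x u) - c0)"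
proof -
  have "(\<Sum>u\<in>V. (a u - a v / a0 v * a0 u) * x u)
      = (\<Sum>u\<in>V. a u * x u) - a v / a0 v * (\<Sum>u\<in>V. a0 u * x u)"
    by (simp add: left_diff_distrib sum_subtractf sum_distrib_left mult.assoc)
  moreover have "a v / a0 v * (a0 v * x v) = a v * x v"
    using assms(3) by simp
  ultimately show ?thesis
    using assms(1,2) by (simp add: eliminate_def right_diff_distrib distrib_left)
qed

lemma solves_eliminate_iff:
  assumes "finite V" "v \<notin> V" "a0 v \<noteq> 0" "(\<Sum>u\<in>insert v V. a0 u * x u) = c0"
  shows "solves (insert v V) E x \<longleftrightarrow> solves V (eliminate v a0 c0 ` E) x"
proof -
  have residual: "(\<Sum>u\<in>V. fst (eliminate v a0 c0 ac) u * x u) - snd (eliminate v a0 c0 ac)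
      = (\<Sum>u\<in>insert v V. fst ac u * x u) - snd ac" for ac
    using eliminate_residual[of V v a0 c0 "fst ac" "snd ac" x] assms by simp
  have "(\<Sum>u\<in>V. fst (eliminate v a0 c0 ac) u * x u) = snd (eliminate v a0 c0 ac)
      \<longleftrightarrow> (\<Sum>u\<in>insert v V. fst ac u * x u) = snd ac" for ac
    using residual[of ac] by (intro iffI; linarith)
  then show ?thesis
    unfolding solves_def by (simp add: case_prod_beta)
qed

lemma rational_system_eliminate:
  assumes "rational_system (insert v V) E" "(a0, c0) \<in> E"
  shows "rational_system V (eliminate v a0 c0 ` E)"
proof -
  have "(\<forall>u\<in>V. a u - a v / a0 v * a0 u \<in> \<rat>) \<and> c - a v / a0 v * c0 \<in> \<rat>" if "(a, c) \<in> E" for a c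
  proof -
    have "\<forall>u\<in>insert v V. a u \<in> \<rat>" "c \<in> \<rat>" "\<forall>u\<in>insert v V. a0 u \<in> \<rat>" "c0 \<in> \<rat>"
      using assms that unfolding rational_system_def by fastforce+
    then show ?thesis by auto
  qed
  then show ?thesis
    unfolding rational_system_def eliminate_def by auto
qed

lemma back_substitution_close:
  fixes a0 x x' :: "'v \<Rightarrow> real"
  assumes "finite V" "v \<notin> V" "a0 v \<noteq> 0" "(\<Sum>u\<in>insert v V. a0 u * x u) = c0"
    and "\<forall>u\<in>V. \<bar>x' u - x u\<bar> \<le> e"
  shows "\<bar>(c0 - (\<Sum>u\<in>V. a0 u * x' u)) / a0 v - x v\<bar> \<le> (\<Sum>u\<in>V. \<bar>a0 u\<bar>) / \<bar>a0 v\<bar> * e"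
proof -
  have "x v = (c0 - (\<Sum>u\<in>V. a0 u * x u)) / a0 v"
  proof -
    have "a0 v * x v = c0 - (\<Sum>u\<in>V. a0 u * x u)"
      using assms(1-4) by (simp add: algebra_simps)
    then show ?thesis
      using assms(3) by (metis nonzero_mult_div_cancel_left)
  qed
  then have "(c0 - (\<Sum>u\<in>V. a0 u * x' u)) / a0 v - x v = (\<Sum>u\<in>V. a0 u * (x u - x' u)) / a0 v"
    by (simp add: diff_divide_distrib algebra_simps sum_subtractf)
  moreover have "\<bar>\<Sum>u\<in>V. a0 u * (x u - x' u)\<bar> \<le> (\<Sum>u\<in>V. \<bar>a0 u\<bar> * e)"
    by (rule order_trans[OF sum_abs sum_mono])
      (use assms(5) in \<open>auto simp: abs_mult abs_minus_commute intro: mult_left_mono\<close>)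
  ultimately show ?thesis
    by (simp add: abs_divide divide_right_mono sum_distrib_right)
qed

lemma back_substitution:
  assumes "finite V" "v \<notin> V" "(a0, c0) \<in> E" "a0 v \<noteq> 0" "rational_system (insert v V) E"
    and "solves (insert v V) E x" "\<forall>u\<in>V. x' u \<in> \<rat> \<and> \<bar>x' u - x u\<bar> \<le> e"
    and "solves V (eliminate v a0 c0 ` E) x'"
  shows "\<exists>r\<in>\<rat>. \<bar>r - x v\<bar> \<le> (\<Sum>u\<in>V. \<bar>a0 u\<bar>) / \<bar>a0 v\<bar> * e \<and> solves (insert v V) E (x'(v := r))"
proof -
  define r where "r = (c0 - (\<Sum>u\<in>V. a0 u * x' u)) / a0 v"
  have "\<forall>u\<in>insert v V. a0 u \<in> \<rat>" "c0 \<in> \<rat>"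
    using assms(3,5) unfolding rational_system_def by fastforce+
  then have "r \<in> \<rat>"
    using assms(7) unfolding r_def by (simp add: Rats_sum)
  moreover have "\<bar>r - x v\<bar> \<le> (\<Sum>u\<in>V. \<bar>a0 u\<bar>) / \<bar>a0 v\<bar> * e"
    using back_substitution_close[of V v a0 x c0 x' e, OF assms(1,2,4)] assms(3,6,7)
    unfolding r_def solves_def by fastforce
  moreover have "(\<Sum>u\<in>V. a0 u * (x'(v := r)) u) = (\<Sum>u\<in>V. a0 u * x' u)"
    using assms(2) by (intro sum.cong) auto
  then have "(\<Sum>u\<in>insert v V. a0 u * (x'(v := r)) u) = c0"
    using assms(1,2,4) unfolding r_def by simp
  moreover have "solves V (eliminate v a0 c0 ` E) (x'(v := r))"
    using assms(2,8) solves_cong[of V "x'(v := r)" x'] by (metis fun_upd_other)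
  ultimately show ?thesis
    using solves_eliminate_iff[of V v a0 _ c0 E, OF assms(1,2,4)] by blast
qed

lemma rational_solution_near:
  assumes "finite V" "rational_system V E" "solves V E x" "\<epsilon> > 0"
  shows "\<exists>x'. (\<forall>v\<in>V. x' v \<in> \<rat> \<and> \<bar>x' v - x v\<bar> < \<epsilon>) \<and> solves V E x'"
  using assms
proof (induction V arbitrary: E x \<epsilon> rule: finite_induct)
  case empty
  then show ?case by (metis empty_iff)
next
  case (insert v V)
  show ?case
  proof (cases "\<forall>(a, c)\<in>E. a v = 0")
    case True
    note free = solves_insert_free_var[OF insert.hyps True]
    obtain x' where x': "\<forall>u\<in>V. x' u \<in> \<rat> \<and> \<bar>x' u - x u\<bar> < \<epsilon>" "solves V E x'"
      using insert.IH[OF rational_system_subset[OF insert.prems(1)]] free insert.prems(2,3) by blast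
    obtain r where r: "r \<in> \<rat>" "\<bar>r - x v\<bar> < \<epsilon>"
      using Rats_dense_in_real[of "x v - \<epsilon>" "x v + \<epsilon>"] insert.prems(3) by auto
    have "solves (insert v V) E (x'(v := r))"
      using x'(2) free solves_cong[of V "x'(v := r)" x' E] insert.hyps(2) by (metis fun_upd_other)
    moreover have "\<forall>u\<in>insert v V. (x'(v := r)) u \<in> \<rat> \<and> \<bar>(x'(v := r)) u - x u\<bar> < \<epsilon>"
      using x'(1) r by simp
    ultimately show ?thesis
      by blast
  next
    case False
    then obtain a0 c0 where pivot: "(a0, c0) \<in> E" "a0 v \<noteq> 0" by auto
    have pivot_eq: "(\<Sum>u\<in>insert v V. a0 u * x u) = c0"
      using insert.prems(2) pivot(1) unfolding solves_def by fastforce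
    define K where "K = (\<Sum>u\<in>V. \<bar>a0 u\<bar>) / \<bar>a0 v\<bar>"
    define e where "e = \<epsilon> / (K + 1)"
    have "K \<ge> 0"
      unfolding K_def by (simp add: sum_nonneg)
    then have e: "e > 0" "e \<le> \<epsilon>" "K * e < \<epsilon>"
      using insert.prems(3) unfolding e_def by (simp_all add: field_simps)
    have "solves V (eliminate v a0 c0 ` E) x"
      using solves_eliminate_iff[OF insert.hyps(1,2) pivot(2) pivot_eq] insert.prems(2) by blast
    then obtain x' where x': "\<forall>u\<in>V. x' u \<in> \<rat> \<and> \<bar>x' u - x u\<bar> < e"
      "solves V (eliminate v a0 c0 ` E) x'"
      using insert.IH rational_system_eliminate[OF insert.prems(1) pivot(1)] e(1) by blast
    then obtain r where r: "r \<in> \<rat>" "\<bar>r - x v\<bar> \<le> K * e" "solves (insert v V) E (x'(v := r))"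
      using back_substitution[OF insert.hyps(1,2) pivot insert.prems(1,2), of x' e]
      unfolding K_def by fastforce
    then have "\<forall>u\<in>insert v V. (x'(v := r)) u \<in> \<rat> \<and> \<bar>(x'(v := r)) u - x u\<bar> < \<epsilon>"
      using x'(1) e(2,3) by force
    then show ?thesis
      using r(3) by blast
  qed
qed

lemma rational_common_denominator:
  assumes "finite A" "\<forall>a\<in>A. g a \<in> \<rat>"
  shows "\<exists>D::nat. D > 0 \<and> (\<forall>a\<in>A. real D * g a \<in> \<int>)"
  using assms
proof (induction A rule: finite_induct)
  case empty
  then show ?case by (intro exI[of _ 1]) auto
next
  case (insert a A)
  then obtain D where D: "D > 0" "\<forall>a\<in>A. real D * g a \<in> \<int>" by auto
  obtain p q where pq: "q > 0" "g a = of_int p / of_int q"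
    using insert.prems by (meson Rats_cases' insertI1)
  have Dq: "real (D * nat q) = of_int q * real D"
    using pq(1) by simp
  show ?case
  proof (intro exI[of _ "D * nat q"] conjI ballI)
    show "D * nat q > 0"
      using D(1) pq(1) by simp
    fix b assume "b \<in> insert a A"
    moreover have "real (D * nat q) * g a = of_int (int D * p)"
      using pq by (simp add: Dq)
    moreover have "real (D * nat q) * g b = of_int q * (real D * g b)"
      unfolding Dq by (simp add: ac_simps)
    ultimately show "real (D * nat q) * g b \<in> \<int>"
      using D(2) by (metis Ints_mult Ints_of_int insertE)
  qed
qed

section \<open>Local weights and the polytope\<close>

lemma finite_local_code:
  fixes H :: "nat \<Rightarrow> nat \<Rightarrow> 'r::{ring,finite}"
  shows "finite (local_code H n j)"
proof -
  let ?S = "supp_row H n j"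
  have "finite {b. \<forall>i. (i \<in> ?S \<longrightarrow> b i \<in> (UNIV :: 'r set)) \<and> (i \<notin> ?S \<longrightarrow> b i = 0)}"
    by (rule finite_set_of_finite_funs) (simp_all add: supp_row_def)
  moreover have "local_code H n j \<subseteq> {b. \<forall>i. (i \<in> ?S \<longrightarrow> b i \<in> UNIV) \<and> (i \<notin> ?S \<longrightarrow> b i = 0)}"
    unfolding local_code_def by auto
  ultimately show ?thesis
    by (rule rev_finite_subset)
qed

lemma zero_in_local_code: "(\<lambda>_. 0) \<in> local_code H n j"
  unfolding local_code_def by simp

definition marginal ::
  "(nat \<Rightarrow> nat \<Rightarrow> 'r::{ring,finite}) \<Rightarrow> nat \<Rightarrow> (nat \<Rightarrow> (nat \<Rightarrow> 'r) \<Rightarrow> real) \<Rightarrow> nat \<Rightarrow> nat \<Rightarrow> 'r \<Rightarrow> real" where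
  "marginal H n w j i \<alpha> = (\<Sum>b\<in>{b\<in>local_code H n j. b i = \<alpha>}. w j b)"

definition consistent_weights ::
  "(nat \<Rightarrow> nat \<Rightarrow> 'r::{ring,finite}) \<Rightarrow> nat \<Rightarrow> nat \<Rightarrow> (nat \<Rightarrow> (nat \<Rightarrow> 'r) \<Rightarrow> real) \<Rightarrow> bool" where
  "consistent_weights H n m w \<longleftrightarrow>
     (\<forall>j\<in>{1..m}. (\<Sum>b\<in>local_code H n j. w j b) = 1) \<and>
     (\<forall>j\<in>{1..m}. \<forall>j'\<in>{1..m}. \<forall>i\<in>supp_row H n j \<inter> supp_row H n j'. \<forall>\<alpha>. \<alpha> \<noteq> 0 \<longrightarrow>
        marginal H n w j i \<alpha> = marginal H n w j' i \<alpha>)"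

definition nonneg_weights ::
  "(nat \<Rightarrow> nat \<Rightarrow> 'r::{ring,finite}) \<Rightarrow> nat \<Rightarrow> nat \<Rightarrow> (nat \<Rightarrow> (nat \<Rightarrow> 'r) \<Rightarrow> real) \<Rightarrow> bool" where
  "nonneg_weights H n m w \<longleftrightarrow> (\<forall>j\<in>{1..m}. \<forall>b\<in>local_code H n j. 0 \<le> w j b)"

definition covered :: "(nat \<Rightarrow> nat \<Rightarrow> 'r::{ring,finite}) \<Rightarrow> nat \<Rightarrow> nat \<Rightarrow> nat \<Rightarrow> bool" where
  "covered H n m i \<longleftrightarrow> (\<exists>j\<in>{1..m}. i \<in> supp_row H n j)"

definition covering_check :: "(nat \<Rightarrow> nat \<Rightarrow> 'r::{ring,finite}) \<Rightarrow> nat \<Rightarrow> nat \<Rightarrow> nat \<Rightarrow> nat" where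
  "covering_check H n m i = (SOME j. j \<in> {1..m} \<and> i \<in> supp_row H n j)"

definition marginal_vec ::
  "(nat \<Rightarrow> nat \<Rightarrow> 'r::{ring,finite}) \<Rightarrow> nat \<Rightarrow> nat \<Rightarrow> (nat \<Rightarrow> (nat \<Rightarrow> 'r) \<Rightarrow> real) \<Rightarrow> nat \<Rightarrow> 'r \<Rightarrow> real" where
  "marginal_vec H n m w i \<alpha> =
     (if covered H n m i then marginal H n w (covering_check H n m i) i \<alpha> else 0)"

lemma covering_check_spec:
  "covered H n m i \<Longrightarrow> covering_check H n m i \<in> {1..m} \<and> i \<in> supp_row H n (covering_check H n m i)"
  unfolding covered_def covering_check_def by (rule someI_ex) auto

lemma marginal_linear:
  "marginal H n (\<lambda>j b. s * w1 j b + t * w2 j b) j i \<alpha> = s * marginal H n w1 j i \<alpha> + t * marginal H n w2 j i \<alpha>"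
  unfolding marginal_def by (simp add: sum.distrib sum_distrib_left)

lemma marginal_vec_linear:
  "marginal_vec H n m (\<lambda>j b. s * w1 j b + t * w2 j b) i \<alpha>
     = s * marginal_vec H n m w1 i \<alpha> + t * marginal_vec H n m w2 i \<alpha>"
  unfolding marginal_vec_def by (simp add: marginal_linear)

lemma consistent_weights_marginal_eq:
  "consistent_weights H n m w \<Longrightarrow> j \<in> {1..m} \<Longrightarrow> j' \<in> {1..m} \<Longrightarrow> i \<in> supp_row H n j
     \<Longrightarrow> i \<in> supp_row H n j' \<Longrightarrow> \<alpha> \<noteq> 0 \<Longrightarrow> marginal H n w j i \<alpha> = marginal H n w j' i \<alpha>"
  unfolding consistent_weights_def by blast

lemma consistent_weights_affine:
  fixes H :: "nat \<Rightarrow> nat \<Rightarrow> 'r::{ring,finite}"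
  assumes "s + t = 1" "consistent_weights H n m w1" "consistent_weights H n m w2"
  shows "consistent_weights H n m (\<lambda>j b. s * w1 j b + t * w2 j b)"
  unfolding consistent_weights_def
proof (intro conjI ballI allI impI)
  fix j assume "j \<in> {1..m}"
  then have "(\<Sum>b\<in>local_code H n j. w1 j b) = 1" "(\<Sum>b\<in>local_code H n j. w2 j b) = 1"
    using assms(2,3) unfolding consistent_weights_def by blast+
  moreover have "(\<Sum>b\<in>local_code H n j. s * w1 j b + t * w2 j b)
      = s * (\<Sum>b\<in>local_code H n j. w1 j b) + t * (\<Sum>b\<in>local_code H n j. w2 j b)"
    by (simp add: sum.distrib sum_distrib_left)
  ultimately show "(\<Sum>b\<in>local_code H n j. s * w1 j b + t * w2 j b) = 1"
    using assms(1) by simp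
next
  fix j j' i and \<alpha> :: 'r
  assume j: "j \<in> {1..m}" "j' \<in> {1..m}" and i: "i \<in> supp_row H n j \<inter> supp_row H n j'"
    and "\<alpha> \<noteq> 0"
  then have "marginal H n w1 j i \<alpha> = marginal H n w1 j' i \<alpha>"
    "marginal H n w2 j i \<alpha> = marginal H n w2 j' i \<alpha>"
    using consistent_weights_marginal_eq[OF assms(2) j] consistent_weights_marginal_eq[OF assms(3) j] by blast+
  then show "marginal H n (\<lambda>j b. s * w1 j b + t * w2 j b) j i \<alpha>
      = marginal H n (\<lambda>j b. s * w1 j b + t * w2 j b) j' i \<alpha>"
    unfolding marginal_linear by simp
qed

lemma marginal_vec_eq_marginal:
  assumes "consistent_weights H n m w" "j \<in> {1..m}" "i \<in> supp_row H n j" "\<alpha> \<noteq> 0"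
  shows "marginal_vec H n m w i \<alpha> = marginal H n w j i \<alpha>"
proof -
  have "covered H n m i"
    using assms(2,3) unfolding covered_def by blast
  then obtain J where J: "J \<in> {1..m}" "i \<in> supp_row H n J"
    "marginal_vec H n m w i \<alpha> = marginal H n w J i \<alpha>"
    using covering_check_spec[of H n m i] unfolding marginal_vec_def by auto
  then show ?thesis
    using consistent_weights_marginal_eq[OF assms(1) J(1) assms(2) J(2) assms(3,4)] by simp
qed

lemma in_polytope_Q_marginal:
  "in_polytope_Q H n m f w \<Longrightarrow> j \<in> {1..m} \<Longrightarrow> i \<in> supp_row H n j \<Longrightarrow> \<alpha> \<noteq> 0
     \<Longrightarrow> f i \<alpha> = marginal H n w j i \<alpha>"
  unfolding in_polytope_Q_def marginal_def by blast

lemma in_polytope_Q_weights: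
  fixes H :: "nat \<Rightarrow> nat \<Rightarrow> 'r::{ring,finite}"
  assumes "in_polytope_Q H n m f w"
  shows "consistent_weights H n m w" "nonneg_weights H n m w"
proof -
  show "consistent_weights H n m w"
    unfolding consistent_weights_def
  proof (intro conjI ballI allI impI)
    show "(\<Sum>b\<in>local_code H n j. w j b) = 1" if "j \<in> {1..m}" for j
      using assms that unfolding in_polytope_Q_def by blast
    fix j j' i and \<alpha> :: 'r
    assume "j \<in> {1..m}" "j' \<in> {1..m}" "i \<in> supp_row H n j \<inter> supp_row H n j'" "\<alpha> \<noteq> 0"
    then show "marginal H n w j i \<alpha> = marginal H n w j' i \<alpha>"
      using in_polytope_Q_marginal[OF assms] by (metis IntD1 IntD2)
  qed
  show "nonneg_weights H n m w"
    using assms unfolding nonneg_weights_def in_polytope_Q_def by blast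
qed

lemma in_polytope_Q_eq_marginal_vec:
  assumes "in_polytope_Q H n m f w" "covered H n m i" "\<alpha> \<noteq> 0"
  shows "f i \<alpha> = marginal_vec H n m w i \<alpha>"
proof -
  have "marginal_vec H n m w i \<alpha> = marginal H n w (covering_check H n m i) i \<alpha>"
    using assms(2) unfolding marginal_vec_def by simp
  then show ?thesis
    using in_polytope_Q_marginal[OF assms(1)] covering_check_spec[OF assms(2)] assms(3) by simp
qed

lemma in_polytope_Q_marginal_vec:
  fixes H :: "nat \<Rightarrow> nat \<Rightarrow> 'r::{ring,finite}"
  assumes "consistent_weights H n m w" "nonneg_weights H n m w"
  shows "in_polytope_Q H n m (marginal_vec H n m w) w"
  unfolding in_polytope_Q_def
proof (intro ballI conjI allI impI)
  fix j assume j: "j \<in> {1..m}"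
  show "0 \<le> w j b" if "b \<in> local_code H n j" for b
    using assms(2) j that unfolding nonneg_weights_def by blast
  show "(\<Sum>b\<in>local_code H n j. w j b) = 1"
    using assms(1) j unfolding consistent_weights_def by blast
  fix i and \<alpha> :: 'r
  assume "i \<in> supp_row H n j" "\<alpha> \<noteq> 0"
  then show "marginal_vec H n m w i \<alpha> = (\<Sum>b\<in>{b\<in>local_code H n j. b i = \<alpha>}. w j b)"
    using marginal_vec_eq_marginal[OF assms(1) j] unfolding marginal_def by blast
qed

lemma in_polytope_Q_add_uncovered:
  assumes "in_polytope_Q H n m f w" "\<And>i \<alpha>. covered H n m i \<Longrightarrow> \<alpha> \<noteq> 0 \<Longrightarrow> e i \<alpha> = 0"
  shows "in_polytope_Q H n m (\<lambda>i \<alpha>. f i \<alpha> + e i \<alpha>) w"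
proof -
  have "e i \<alpha> = 0" if "j \<in> {1..m}" "i \<in> supp_row H n j" "\<alpha> \<noteq> 0" for j i \<alpha>
    using assms(2) that unfolding covered_def by blast
  then show ?thesis
    using assms(1) unfolding in_polytope_Q_def by auto
qed

lemma in_polytope_Q_zero:
  "in_polytope_Q H n m (\<lambda>_ _. 0) (\<lambda>j b. if b = (\<lambda>_. 0) then 1 else 0)"
  unfolding in_polytope_Q_def
  by (auto simp: sum.delta[OF finite_local_code] zero_in_local_code intro!: sum.neutral)

lemma cost_linear:
  "cost n p y (\<lambda>i \<alpha>. s * f i \<alpha> + t * g i \<alpha>) = s * cost n p y f + t * cost n p y g"
  unfolding cost_def by (simp add: algebra_simps sum.distrib sum_distrib_left)

lemma cost_scale: "cost n p y (\<lambda>i \<alpha>. s * f i \<alpha>) = s * cost n p y f"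
  unfolding cost_def by (simp add: algebra_simps sum_distrib_left)

lemma cost_cong:
  assumes "\<And>i \<alpha>. i \<in> {1..n} \<Longrightarrow> \<alpha> \<noteq> 0 \<Longrightarrow> llr p \<alpha> (y i) * f i \<alpha> = llr p \<alpha> (y i) * g i \<alpha>"
  shows "cost n p y f = cost n p y g"
  unfolding cost_def using assms by (intro sum.cong) auto

lemma cost_eq_0_if_not_nonzero_vec:
  fixes f :: "nat \<Rightarrow> 'r::{ring,finite} \<Rightarrow> real"
  assumes "\<not> nonzero_vec n f"
  shows "cost n p y f = 0"
  using assms unfolding cost_def nonzero_vec_def by (fastforce intro!: sum.neutral)

lemma cost_unit_vec:
  fixes p :: "'s \<Rightarrow> 'r::{ring,finite} \<Rightarrow> real"
  assumes "i \<in> {1..n}" "\<alpha> \<noteq> 0"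
  shows "cost n p y (\<lambda>i' \<alpha>'. if i' = i \<and> \<alpha>' = \<alpha> then 1 else 0) = llr p \<alpha> (y i)"
proof -
  have "(\<Sum>\<alpha>'\<in>{\<alpha>'. \<alpha>' \<noteq> 0}. llr p \<alpha>' (y i') * (if i' = i \<and> \<alpha>' = \<alpha> then 1 else 0))
      = (if i' = i then llr p \<alpha> (y i) else 0)" for i'
    using assms(2) by (simp add: if_distrib[of "\<lambda>t. _ * t"] sum.delta' cong: if_cong)
  then show ?thesis
    using assms(1) unfolding cost_def by (simp add: sum.delta')
qed

lemma LP_minimizer_cost_nonpos:
  "LP_minimizer H n m p y f w \<Longrightarrow> cost n p y f \<le> 0"
  using in_polytope_Q_zero unfolding LP_minimizer_def cost_def by fastforce

text \<open>A coordinate in no check can be moved freely inside \<open>Q\<close>, so a minimizer forces its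
  log-likelihood ratios to vanish.\<close>

lemma LP_minimizer_llr_uncovered:
  assumes "LP_minimizer H n m p y f w" "i \<in> {1..n}" "\<alpha> \<noteq> 0" "\<not> covered H n m i"
  shows "llr p \<alpha> (y i) = 0"
proof -
  define e where "e = (\<lambda>i' \<alpha>'. if i' = i \<and> \<alpha>' = \<alpha> then 1 else (0::real))"
  have "in_polytope_Q H n m (\<lambda>i' \<alpha>'. f i' \<alpha>' + c * e i' \<alpha>') w" for c
    using assms(1,4) unfolding LP_minimizer_def e_def
    by (intro in_polytope_Q_add_uncovered) auto
  then have shifted: "cost n p y f \<le> cost n p y (\<lambda>i' \<alpha>'. f i' \<alpha>' + c * e i' \<alpha>')" for c
    using assms(1) unfolding LP_minimizer_def by blast
  have "cost n p y f \<le> cost n p y f + c * llr p \<alpha> (y i)" for c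
    using shifted[of c] cost_linear[of n p y 1 f c e] cost_unit_vec[OF assms(2,3), of p y] unfolding e_def by simp
  from this[of 1] this[of "-1"] show ?thesis
    by linarith
qed

lemma LP_minimizer_cost_marginal_vec:
  fixes H :: "nat \<Rightarrow> nat \<Rightarrow> 'r::{ring,finite}"
  assumes "LP_minimizer H n m p y f w"
  shows "cost n p y f = cost n p y (marginal_vec H n m w)"
proof (rule cost_cong)
  fix i and \<alpha> :: 'r
  assume "i \<in> {1..n}" "\<alpha> \<noteq> 0"
  then show "llr p \<alpha> (y i) * f i \<alpha> = llr p \<alpha> (y i) * marginal_vec H n m w i \<alpha>"
  proof (cases "covered H n m i")
    case True
    then show ?thesis
      using assms \<open>\<alpha> \<noteq> 0\<close> in_polytope_Q_eq_marginal_vec unfolding LP_minimizer_def by metis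
  next
    case False
    then show ?thesis
      using LP_minimizer_llr_uncovered[OF assms \<open>i \<in> {1..n}\<close> \<open>\<alpha> \<noteq> 0\<close>] by simp
  qed
qed

section \<open>Pseudocodewords of negative cost\<close>

lemma LP_pseudocodeword_scaled_in_polytope_Q:
  fixes H :: "nat \<Rightarrow> nat \<Rightarrow> 'r::{ring,finite}"
  assumes "\<forall>j\<in>{1..m}. (\<Sum>b\<in>local_code H n j. z j b) = M \<and>
      (\<forall>i\<in>supp_row H n j. \<forall>\<alpha>. \<alpha> \<noteq> 0 \<longrightarrow> h i \<alpha> = real (\<Sum>b\<in>{b\<in>local_code H n j. b i = \<alpha>}. z j b))"
    and "M > 0"
  shows "in_polytope_Q H n m (\<lambda>i \<alpha>. h i \<alpha> / M) (\<lambda>j b. real (z j b) / M)"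
  unfolding in_polytope_Q_def
proof (intro ballI conjI allI impI)
  fix j assume j: "j \<in> {1..m}"
  show "0 \<le> real (z j b) / M" for b
    by simp
  have "(\<Sum>b\<in>local_code H n j. z j b) = M"
    using assms(1) j by blast
  then have "(\<Sum>b\<in>local_code H n j. real (z j b)) = M"
    by (metis of_nat_sum)
  then show "(\<Sum>b\<in>local_code H n j. real (z j b) / M) = 1"
    using assms(2) by (simp flip: sum_divide_distrib)
  fix i and \<alpha> :: 'r
  assume "i \<in> supp_row H n j" "\<alpha> \<noteq> 0"
  then show "h i \<alpha> / M = (\<Sum>b\<in>{b\<in>local_code H n j. b i = \<alpha>}. real (z j b) / M)"
    using assms(1) j by (simp flip: sum_divide_distrib)
qed

lemma LP_minimizer_cost_neg:
  fixes H :: "nat \<Rightarrow> nat \<Rightarrow> 'r::{ring,finite}"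
  assumes "LP_pseudocodeword H n m h z" "cost n p y h < 0" "LP_minimizer H n m p y f w"
  shows "cost n p y f < 0"
proof -
  obtain M where M: "\<forall>j\<in>{1..m}. (\<Sum>b\<in>local_code H n j. z j b) = M \<and>
      (\<forall>i\<in>supp_row H n j. \<forall>\<alpha>. \<alpha> \<noteq> 0 \<longrightarrow> h i \<alpha> = real (\<Sum>b\<in>{b\<in>local_code H n j. b i = \<alpha>}. z j b))"
    using assms(1) unfolding LP_pseudocodeword_def by blast
  show ?thesis
  proof (cases "M = 0")
    case True
    have "h i \<alpha> = 0" if cov: "covered H n m i" and "\<alpha> \<noteq> 0" for i \<alpha>
    proof -
      obtain j where j: "j \<in> {1..m}" "i \<in> supp_row H n j"
        using cov unfolding covered_def by blast
      then have "(\<Sum>b\<in>local_code H n j. z j b) = 0"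
        using M True by blast
      then have "\<forall>b\<in>local_code H n j. z j b = 0"
        using finite_local_code[of H n j] by simp
      then show ?thesis
        using M j \<open>\<alpha> \<noteq> 0\<close> by simp
    qed
    then have "in_polytope_Q H n m (\<lambda>i \<alpha>. f i \<alpha> + h i \<alpha>) w"
      using assms(3) in_polytope_Q_add_uncovered unfolding LP_minimizer_def by metis
    then have "cost n p y f \<le> cost n p y f + cost n p y h"
      using assms(3) cost_linear[of n p y 1 f 1 h] unfolding LP_minimizer_def by auto
    then show ?thesis
      using assms(2) by simp
  next
    case False
    then have "cost n p y f \<le> cost n p y (\<lambda>i \<alpha>. h i \<alpha> / M)"
      using LP_pseudocodeword_scaled_in_polytope_Q[OF M] assms(3) unfolding LP_minimizer_def by blast
    also have "\<dots> < 0"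
      using cost_scale[of n p y "1 / M" h] assms(2) False by (simp add: divide_neg_pos)
    finally show ?thesis .
  qed
qed

section \<open>Pseudocodewords from decoding errors\<close>

lemma sum_indicator_Pair:
  fixes x :: "'a \<times> 'b \<Rightarrow> real"
  assumes "finite V" "Pair j ` B \<subseteq> V"
  shows "(\<Sum>u\<in>V. indicator (Pair j ` B) u * x u) = (\<Sum>b\<in>B. x (j, b))"
  using assms by (simp add: Int_absorb1 sum.reindex inj_on_def)

definition weight_system ::
  "(nat \<Rightarrow> nat \<Rightarrow> 'r::{ring,finite}) \<Rightarrow> nat \<Rightarrow> nat \<Rightarrow> (nat \<Rightarrow> (nat \<Rightarrow> 'r) \<Rightarrow> real)
     \<Rightarrow> ((nat \<times> (nat \<Rightarrow> 'r) \<Rightarrow> real) \<times> real) set" where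
  "weight_system H n m w =
     (\<Union>j\<in>{1..m}. {(indicator (Pair j ` local_code H n j), 1)}) \<union>
     (\<Union>j\<in>{1..m}. \<Union>j'\<in>{1..m}. \<Union>i\<in>supp_row H n j \<inter> supp_row H n j'. \<Union>\<alpha>\<in>{\<alpha>. \<alpha> \<noteq> 0}.
        {(\<lambda>u. indicator (Pair j ` {b\<in>local_code H n j. b i = \<alpha>}) u
              - indicator (Pair j' ` {b\<in>local_code H n j'. b i = \<alpha>}) u, 0)}) \<union>
     (\<Union>j\<in>{1..m}. \<Union>b\<in>{b\<in>local_code H n j. w j b = 0}. {(indicator {(j, b)}, 0)})"

lemma rational_system_weight_system: "rational_system V (weight_system H n m w)"
proof -
  have "(indicator A u :: real) \<in> \<rat>" for A u
    by (simp add: indicator_def)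
  then show ?thesis
    unfolding rational_system_def weight_system_def by (auto intro!: Rats_diff)
qed

lemma solves_weight_system_iff:
  fixes H :: "nat \<Rightarrow> nat \<Rightarrow> 'r::{ring,finite}" and n m :: nat
  defines "V \<equiv> Sigma {1..m} (local_code H n)"
  shows "solves V (weight_system H n m w) x \<longleftrightarrow>
    consistent_weights H n m (curry x) \<and>
    (\<forall>j\<in>{1..m}. \<forall>b\<in>local_code H n j. w j b = 0 \<longrightarrow> x (j, b) = 0)"
proof -
  have fin: "finite V"
    unfolding V_def by (simp add: finite_local_code)
  have row: "(\<Sum>u\<in>V. indicator (Pair j ` local_code H n j) u * x u) = (\<Sum>b\<in>local_code H n j. curry x j b)"
    if "j \<in> {1..m}" for j
    using that by (subst sum_indicator_Pair[OF fin]) (auto simp: V_def)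
  have col: "(\<Sum>u\<in>V. indicator (Pair j ` {b\<in>local_code H n j. b i = \<alpha>}) u * x u)
      = marginal H n (curry x) j i \<alpha>" if "j \<in> {1..m}" for j i \<alpha>
    unfolding marginal_def using that by (subst sum_indicator_Pair[OF fin]) (auto simp: V_def)
  have col_diff: "(\<Sum>u\<in>V. (indicator (Pair j ` {b\<in>local_code H n j. b i = \<alpha>}) u
        - indicator (Pair j' ` {b\<in>local_code H n j'. b i = \<alpha>}) u) * x u)
      = marginal H n (curry x) j i \<alpha> - marginal H n (curry x) j' i \<alpha>"
    if "j \<in> {1..m}" "j' \<in> {1..m}" for j j' i \<alpha>
    using col[OF that(1)] col[OF that(2)] by (simp add: left_diff_distrib sum_subtractf)
  have point: "(\<Sum>u\<in>V. indicator {(j, b)} u * x u) = x (j, b)" if "j \<in> {1..m}" "b \<in> local_code H n j" for j b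
    using that fin by (simp add: V_def)
  show ?thesis
    unfolding weight_system_def solves_Un solves_UN solves_singleton consistent_weights_def
    by (simp add: row col_diff point) blast
qed

text \<open>Approximating \<open>w\<close> within less than its smallest positive entry keeps the approximation
  positive exactly where \<open>w\<close> is, and below \<open>2 w\<close>.\<close>

lemma rational_weights_same_support:
  fixes H :: "nat \<Rightarrow> nat \<Rightarrow> 'r::{ring,finite}"
  assumes "consistent_weights H n m w" "nonneg_weights H n m w"
  shows "\<exists>w'. consistent_weights H n m w' \<and>
    (\<forall>j\<in>{1..m}. \<forall>b\<in>local_code H n j. w' j b \<in> \<rat> \<and> 0 \<le> w' j b \<and> w' j b \<le> 2 * w j b \<and>
       (0 < w j b \<longrightarrow> 0 < w' j b))"
proof -
  define V where "V = Sigma {1..m} (local_code H n)"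
  have fin: "finite V"
    unfolding V_def by (simp add: finite_local_code)
  define \<epsilon> where "\<epsilon> = Min (insert 1 (case_prod w ` {v\<in>V. 0 < case_prod w v}))"
  have fin_eps: "finite (insert 1 (case_prod w ` {v\<in>V. 0 < case_prod w v}))"
    using fin by simp
  have "\<epsilon> > 0"
    unfolding \<epsilon>_def using fin_eps by (subst Min_gr_iff) auto
  moreover have "solves V (weight_system H n m w) (case_prod w)"
    using assms(1) unfolding V_def solves_weight_system_iff by simp
  ultimately obtain x where x: "\<forall>v\<in>V. x v \<in> \<rat> \<and> \<bar>x v - case_prod w v\<bar> < \<epsilon>"
    "solves V (weight_system H n m w) x"
    using rational_solution_near[OF fin rational_system_weight_system] by blast
  have support: "\<forall>j\<in>{1..m}. \<forall>b\<in>local_code H n j. w j b = 0 \<longrightarrow> x (j, b) = 0"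
    and "consistent_weights H n m (curry x)"
    using x(2) unfolding V_def solves_weight_system_iff by simp_all
  moreover have "0 \<le> x (j, b) \<and> x (j, b) \<le> 2 * w j b \<and> (0 < w j b \<longrightarrow> 0 < x (j, b))"
    if "j \<in> {1..m}" "b \<in> local_code H n j" for j b
  proof (cases "w j b = 0")
    case True
    then show ?thesis
      using support that by simp
  next
    case False
    then have "0 < w j b"
      using assms(2) that unfolding nonneg_weights_def by force
    then have "\<epsilon> \<le> w j b"
      unfolding \<epsilon>_def using fin_eps that by (intro Min_le) (auto simp: V_def)
    then show ?thesis
      using x(1) that unfolding V_def by force
  qed
  ultimately show ?thesis
    using x(1) unfolding V_def by (intro exI[of _ "curry x"]) auto
qed

lemma pseudocodeword_of_rational_weights:
  fixes H :: "nat \<Rightarrow> nat \<Rightarrow> 'r::{ring,finite}"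
  assumes "consistent_weights H n m w" "nonneg_weights H n m w"
    and "\<forall>j\<in>{1..m}. \<forall>b\<in>local_code H n j. w j b \<in> \<rat>"
  shows "\<exists>D>0. \<exists>z. LP_pseudocodeword H n m (\<lambda>i \<alpha>. real D * marginal_vec H n m w i \<alpha>) z"
proof -
  obtain D :: nat where D: "D > 0" "\<forall>v\<in>Sigma {1..m} (local_code H n). real D * case_prod w v \<in> \<int>"
    using rational_common_denominator[of "Sigma {1..m} (local_code H n)" "case_prod w"] assms(3)
    by (auto simp: finite_local_code)
  define z where "z = (\<lambda>j b. nat \<lfloor>real D * w j b\<rfloor>)"
  have z: "real (z j b) = real D * w j b" if "j \<in> {1..m}" "b \<in> local_code H n j" for j b
  proof -
    have "real D * w j b \<in> \<int>" "0 \<le> real D * w j b"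
      using D(2) assms(2) that unfolding nonneg_weights_def by auto
    then obtain k where "real D * w j b = of_int k" "0 \<le> k"
      by (metis Ints_cases of_int_0_le_iff)
    then show ?thesis
      unfolding z_def by simp
  qed
  have "LP_pseudocodeword H n m (\<lambda>i \<alpha>. real D * marginal_vec H n m w i \<alpha>) z"
    unfolding LP_pseudocodeword_def
  proof (intro exI[of _ D] ballI conjI allI impI)
    fix j assume j: "j \<in> {1..m}"
    have "real (\<Sum>b\<in>local_code H n j. z j b) = real D * (\<Sum>b\<in>local_code H n j. w j b)"
      using z[OF j] by (simp add: sum_distrib_left)
    then show "(\<Sum>b\<in>local_code H n j. z j b) = D"
      using assms(1) j unfolding consistent_weights_def by (simp del: of_nat_sum)
    fix i and \<alpha> :: 'r
    assume "i \<in> supp_row H n j" "\<alpha> \<noteq> 0"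
    then show "real D * marginal_vec H n m w i \<alpha> = real (\<Sum>b\<in>{b\<in>local_code H n j. b i = \<alpha>}. z j b)"
      using marginal_vec_eq_marginal[OF assms(1) j] z[OF j]
      unfolding marginal_def by (simp add: sum_distrib_left)
  qed
  then show ?thesis
    using D(1) by blast
qed

lemma marginal_pos_of_support:
  fixes H :: "nat \<Rightarrow> nat \<Rightarrow> 'r::{ring,finite}"
  assumes "nonneg_weights H n m w" "nonneg_weights H n m w'" "j \<in> {1..m}"
    and "marginal H n w j i \<alpha> \<noteq> 0" "\<forall>b\<in>local_code H n j. 0 < w j b \<longrightarrow> 0 < w' j b"
  shows "0 < marginal H n w' j i \<alpha>"
proof -
  have "\<exists>b\<in>{b\<in>local_code H n j. b i = \<alpha>}. w j b \<noteq> 0"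
    using assms(4) unfolding marginal_def by (meson sum.neutral)
  then obtain b where b: "b \<in> local_code H n j" "b i = \<alpha>" "w j b \<noteq> 0"
    by blast
  then have "0 < w' j b"
    using assms(1,3,5) unfolding nonneg_weights_def by force
  then show ?thesis
    unfolding marginal_def using b assms(2,3) finite_local_code[of H n j]
    by (intro sum_pos2[of _ b]) (auto simp: nonneg_weights_def)
qed

lemma LP_minimizer_rational_weights:
  fixes H :: "nat \<Rightarrow> nat \<Rightarrow> 'r::{ring,finite}"
  assumes mn: "LP_minimizer H n m p y f w"
    and i0: "covered H n m i0" "\<alpha>0 \<noteq> 0" "f i0 \<alpha>0 \<noteq> 0"
  shows "\<exists>w'. consistent_weights H n m w' \<and> nonneg_weights H n m w' \<and>
    (\<forall>j\<in>{1..m}. \<forall>b\<in>local_code H n j. w' j b \<in> \<rat>) \<and>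
    cost n p y (marginal_vec H n m w') \<le> 0 \<and> marginal_vec H n m w' i0 \<alpha>0 \<noteq> 0"
proof -
  have Q: "in_polytope_Q H n m f w"
    using mn unfolding LP_minimizer_def by blast
  note w = in_polytope_Q_weights[OF Q]
  obtain w' where w': "consistent_weights H n m w'"
    "\<forall>j\<in>{1..m}. \<forall>b\<in>local_code H n j. w' j b \<in> \<rat> \<and> 0 \<le> w' j b \<and> w' j b \<le> 2 * w j b \<and>
       (0 < w j b \<longrightarrow> 0 < w' j b)"
    using rational_weights_same_support[OF w] by blast
  define w'' where "w'' = (\<lambda>j b. 2 * w j b + (-1) * w' j b)"
  have nonneg: "nonneg_weights H n m w'" "nonneg_weights H n m w''"
    using w'(2) unfolding nonneg_weights_def w''_def by auto
  have "consistent_weights H n m w''"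
    unfolding w''_def by (rule consistent_weights_affine[OF _ w(1) w'(1)]) simp
  then have "cost n p y f \<le> cost n p y (marginal_vec H n m w'')"
    using in_polytope_Q_marginal_vec nonneg(2) mn unfolding LP_minimizer_def by blast
  also have "\<dots> = 2 * cost n p y f - cost n p y (marginal_vec H n m w')"
    unfolding w''_def marginal_vec_linear cost_linear LP_minimizer_cost_marginal_vec[OF mn] by simp
  finally have "cost n p y (marginal_vec H n m w') \<le> 0"
    using LP_minimizer_cost_nonpos[OF mn] by simp
  moreover obtain j where j: "j \<in> {1..m}" "i0 \<in> supp_row H n j"
    using i0(1) unfolding covered_def by blast
  then have "0 < marginal H n w' j i0 \<alpha>0"
    using marginal_pos_of_support[OF w(2) nonneg(1) j(1)] w'(2) in_polytope_Q_marginal[OF Q j i0(2)] i0(3)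
    by simp
  then have "marginal_vec H n m w' i0 \<alpha>0 \<noteq> 0"
    using marginal_vec_eq_marginal[OF w'(1) j i0(2)] by simp
  ultimately show ?thesis
    using w'(1,2) nonneg(1) by blast
qed

lemma LP_error_pseudocodeword:
  fixes H :: "nat \<Rightarrow> nat \<Rightarrow> 'r::{ring,finite}"
  assumes mn: "LP_minimizer H n m p y f w" and "nonzero_vec n f"
  shows "\<exists>h z. LP_pseudocodeword H n m h z \<and> nonzero_vec n h \<and> cost n p y h \<le> 0"
proof -
  obtain i0 and \<alpha>0 :: 'r where i0: "i0 \<in> {1..n}" "\<alpha>0 \<noteq> 0" "f i0 \<alpha>0 \<noteq> 0"
    using assms(2) unfolding nonzero_vec_def by blast
  show ?thesis
  proof (cases "covered H n m i0")
    case True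
    then obtain w' where w': "consistent_weights H n m w'" "nonneg_weights H n m w'"
      "\<forall>j\<in>{1..m}. \<forall>b\<in>local_code H n j. w' j b \<in> \<rat>"
      "cost n p y (marginal_vec H n m w') \<le> 0" "marginal_vec H n m w' i0 \<alpha>0 \<noteq> 0"
      using LP_minimizer_rational_weights[OF mn _ i0(2,3)] by blast
    then obtain D z where "D > 0" "LP_pseudocodeword H n m (\<lambda>i \<alpha>. real D * marginal_vec H n m w' i \<alpha>) z"
      using pseudocodeword_of_rational_weights by blast
    moreover have "cost n p y (\<lambda>i \<alpha>. real D * marginal_vec H n m w' i \<alpha>) \<le> 0"
      using w'(4) by (simp add: cost_scale mult_nonneg_nonpos)
    ultimately show ?thesis
      using w'(5) i0(1,2) unfolding nonzero_vec_def by fastforce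
  next
    case False
    define h where "h = (\<lambda>i \<alpha>. if i = i0 \<and> \<alpha> = \<alpha>0 then 1 else (0::real))"
    have "LP_pseudocodeword H n m h (\<lambda>_ _. 0)"
      using False unfolding LP_pseudocodeword_def h_def covered_def by auto
    moreover have "nonzero_vec n h"
      using i0 unfolding nonzero_vec_def h_def by auto
    moreover have "cost n p y h = llr p \<alpha>0 (y i0)"
      unfolding h_def by (rule cost_unit_vec[OF i0(1,2)])
    moreover have "llr p \<alpha>0 (y i0) = 0"
      by (rule LP_minimizer_llr_uncovered[OF mn i0(1,2) False])
    ultimately show ?thesis
      by fastforce
  qed
qed

theorem theorem2:
  fixes H :: "nat \<Rightarrow> nat \<Rightarrow> 'r::{ring,finite}"
    and n m :: nat
    and p :: "'s \<Rightarrow> 'r \<Rightarrow> real"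
    and y :: "nat \<Rightarrow> 's"
  shows
    "(\<forall>f w. LP_minimizer H n m p y f w \<and> nonzero_vec n f \<longrightarrow>
        (\<exists>h z. LP_pseudocodeword H n m h z \<and> nonzero_vec n h \<and> cost n p y h \<le> 0))
     \<and>
     ((\<exists>h z. LP_pseudocodeword H n m h z \<and> nonzero_vec n h \<and> cost n p y h < 0) \<longrightarrow>
        (\<forall>f w. LP_minimizer H n m p y f w \<longrightarrow> nonzero_vec n f))"
proof (intro conjI allI impI)
  fix f w
  assume "LP_minimizer H n m p y f w \<and> nonzero_vec n f"
  then show "\<exists>h z. LP_pseudocodeword H n m h z \<and> nonzero_vec n h \<and> cost n p y h \<le> 0"
    using LP_error_pseudocodeword by blast
next
  fix f w
  assume "\<exists>h z. LP_pseudocodeword H n m h z \<and> nonzero_vec n h \<and> cost n p y h < 0"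
    and "LP_minimizer H n m p y f w"
  then have "cost n p y f < 0"
    using LP_minimizer_cost_neg by blast
  then show "nonzero_vec n f"
    using cost_eq_0_if_not_nonzero_vec by (metis less_irrefl)
qed

end
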